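(* Let $n\ge4$ be even, $p\ge n+1$ an integer, $c_1$ a positive integer, $a_k=pc_k$, $c_{k+1}=p^2c_k$, and let $T$, $I^{(j)}$, $I^{(j)}_i$ and $\lambda_k$ be as in the context. Then for every odd $k$ with $3\le k\le n-1$ and every $j\ge1$: (1) $\dfrac{\lambda_k(I^{(j)}_k)}{\lambda_k(I^{(j)})}>\dfrac12$; (2) $\dfrac{\lambda_k\bigl(\bigcup_{2\le i\le n-1,\ i\ne k}I^{(j)}_i\bigr)}{\lambda_k(I^{(j)})}<\dfrac{n}{2c_j}$.
   Context: $\pi$ is the permutation of $\{1,\dots,n\}$ with top row $1,2,\dots,n$ and bottom row $n,3,2,5,4,\dots,n-1,n-2,1$. Right Rauzy induction: step "0" when the rightmost domain (top) interval is longer, "1" when the rightmost image (bottom) interval is longer. For $a,c>0$, $\dot\gamma_{m,a}=1^{n-1-m}0^a10^2$, $\gamma_{a,c}=0\,\dot\gamma_{n-2,a}\cdots\dot\gamma_{2,a}\,1^{c(n-1)}$; its transition matrix $\Theta_{a,c}$ (old lengths $=\Theta_{a,c}\cdot$new lengths) has row $1=(1,c,\dots,c)$, row $n=(1,c+1,\dots,c+1)$, and for $1\le i\le(n-2)/2$: row $2i$ has $0$ in column 1, $2$ in columns $2i,2i+1$, $1$ in the other columns among $2,\dots,n$; row $2i+1$ has $a$ in column $2i$, $a+1$ in column $2i+1$, $0$ elsewhere. $\Theta_k=\Theta_{a_k,c_k}$. $T$ is an IET of $[0,1)$ with permutation $\pi$ whose right Rauzy induction path is $\gamma_{a_1,c_1}\gamma_{a_2,c_2}\cdots$;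 $I^{(j)}$ is the interval on which the induced map lives after the first $j$ blocks and $I^{(j)}_1,\dots,I^{(j)}_n$ its exchanged subintervals; lengths satisfy $\ell^{(j-1)}=\Theta_j\ell^{(j)}$. For $v\ge0$, $|v|$ is the sum of entries and $\overline v=v/|v|$. $\lambda_k$ denotes the $T$-invariant Borel probability measure such that for every $j\ge0$, $(\lambda_k(I^{(j)}_i))_i$ is a positive multiple of $\lim_{m\to\infty}\overline{\Theta_{j+1}\cdots\Theta_me_k}$. *)

theory Defs
  imports "HOL-Analysis.Analysis" "HOL-Probability.Probability"
begin

(* Labelled interval exchange data: (top row, bottom row, lengths indexed by label). *)
type_synonym iet = "nat list \<times> nat list \<times> (nat \<Rightarrow> real)"

definition insert_after :: "nat \<Rightarrow> nat \<Rightarrow> nat list \<Rightarrow> nat list" where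
  "insert_after x y xs = takeWhile (\<lambda>z. z \<noteq> x) xs @ take 1 (dropWhile (\<lambda>z. z \<noteq> x) xs)
      @ [y] @ drop 1 (dropWhile (\<lambda>z. z \<noteq> x) xs)"

(* One step of labelled right Rauzy induction, required to be of type e
   (0: rightmost top interval strictly longer, 1: rightmost bottom interval strictly longer). *)
definition rauzy_step :: "nat \<Rightarrow> iet \<Rightarrow> iet option" where
  "rauzy_step e s = (case s of (t, b, l) \<Rightarrow>
     let \<alpha> = last t; \<beta> = last b in
     if e = 0 then
       (if l \<alpha> > l \<beta> then Some (t, insert_after \<alpha> \<beta> (butlast b), l(\<alpha> := l \<alpha> - l \<beta>)) else None)
     else if e = 1 then
       (if l \<beta> > l \<alpha> then Some (insert_after \<beta> \<alpha> (butlast t), b, l(\<beta> := l \<beta> - l \<alpha>)) else None)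
     else None)"

fun rauzy_run :: "iet \<Rightarrow> nat list \<Rightarrow> iet option" where
  "rauzy_run s [] = Some s"
| "rauzy_run s (e # w) = (case rauzy_step e s of None \<Rightarrow> None | Some s' \<Rightarrow> rauzy_run s' w)"

definition pi_top :: "nat \<Rightarrow> nat list" where
  "pi_top n = [1..<n+1]"
definition pi_bot :: "nat \<Rightarrow> nat list" where
  "pi_bot n = [n] @ concat (map (\<lambda>i. [2*i+1, 2*i]) [1..<(n-2) div 2 + 1]) @ [1]"

definition gamma_dot :: "nat \<Rightarrow> nat \<Rightarrow> nat \<Rightarrow> nat list" where
  "gamma_dot n m a = replicate (n - 1 - m) 1 @ replicate a 0 @ [1] @ [0, 0]"

definition gamma_word :: "nat \<Rightarrow> nat \<Rightarrow> nat \<Rightarrow> nat list" where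
  "gamma_word n a c = [0] @ concat (map (\<lambda>i. gamma_dot n (n - 2*i) a) [1..<(n-2) div 2 + 1])
                        @ replicate (c * (n - 1)) 1"

definition Theta :: "nat \<Rightarrow> nat \<Rightarrow> nat \<Rightarrow> nat \<Rightarrow> nat \<Rightarrow> real" where
  "Theta n a c i j =
    (if i \<in> {1..n} \<and> j \<in> {1..n} then
      (if i = 1 then (if j = 1 then 1 else real c)
       else if i = n then (if j = 1 then 1 else real c + 1)
       else if even i then (if j = 1 then 0 else if j = i \<or> j = i + 1 then 2 else 1)
       else (if j + 1 = i then real a else if j = i then real a + 1 else 0))
     else 0)"

definition mat_vec :: "nat \<Rightarrow> (nat \<Rightarrow> nat \<Rightarrow> real) \<Rightarrow> (nat \<Rightarrow> real) \<Rightarrow> nat \<Rightarrow> real" where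
  "mat_vec n M v = (\<lambda>i. \<Sum>j\<in>{1..n}. M i j * v j)"

definition unit_vec :: "nat \<Rightarrow> nat \<Rightarrow> real" where
  "unit_vec k = (\<lambda>i. if i = k then 1 else 0)"

definition vnorm1 :: "nat \<Rightarrow> (nat \<Rightarrow> real) \<Rightarrow> real" where
  "vnorm1 n v = (\<Sum>i\<in>{1..n}. v i)"
definition vnormalize :: "nat \<Rightarrow> (nat \<Rightarrow> real) \<Rightarrow> nat \<Rightarrow> real" where
  "vnormalize n v = (\<lambda>i. v i / vnorm1 n v)"

definition mat_prod_apply :: "nat \<Rightarrow> (nat \<Rightarrow> nat \<Rightarrow> nat \<Rightarrow> real) \<Rightarrow> nat \<Rightarrow> nat \<Rightarrow> (nat \<Rightarrow> real) \<Rightarrow> nat \<Rightarrow> real" where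
  "mat_prod_apply n Th j m v = foldr (\<lambda>i w. mat_vec n (Th i) w) [Suc j..<Suc m] v"

(* geometry of an IET datum: domain intervals are laid out in top order starting at 0,
   image intervals in bottom order *)
definition start_in :: "nat list \<Rightarrow> (nat \<Rightarrow> real) \<Rightarrow> nat \<Rightarrow> real" where
  "start_in xs l i = sum_list (map l (takeWhile (\<lambda>x. x \<noteq> i) xs))"

definition sub_interval :: "iet \<Rightarrow> nat \<Rightarrow> real set" where
  "sub_interval s i = (case s of (t, b, l) \<Rightarrow> {start_in t l i ..< start_in t l i + l i})"

definition whole_interval :: "iet \<Rightarrow> real set" where
  "whole_interval s = (case s of (t, b, l) \<Rightarrow> {0 ..< sum_list (map l t)})"

(* the IET map (identity outside its domain) *)
definition iet_map :: "iet \<Rightarrow> real \<Rightarrow> real" where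
  "iet_map s x = (case s of (t, b, l) \<Rightarrow>
     x + (\<Sum>i\<in>set t. if x \<in> sub_interval s i then start_in b l i - start_in t l i else 0))"

fun block_state :: "iet \<Rightarrow> (nat \<Rightarrow> nat list) \<Rightarrow> nat \<Rightarrow> iet" where
  "block_state s0 G 0 = s0"
| "block_state s0 G (Suc j) = the (rauzy_run (block_state s0 G j) (G (Suc j)))"

(* the right Rauzy induction path of s0 is G 1 G 2 G 3 ... *)
definition follows_path :: "iet \<Rightarrow> (nat \<Rightarrow> nat list) \<Rightarrow> bool" where
  "follows_path s0 G = (\<forall>j. rauzy_run (block_state s0 G j) (G (Suc j)) \<noteq> None)"

end

theory Submission
  imports Defs
begin

(* The lambda_k-masses of the intervals I^(j)_i are proportional to the limit w of the normalised
   vectors Theta_(j+1) ... Theta_m e_k.  Call a nonnegative vector (theta, C)-concentrated if at least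
   the fraction theta of its mass sits on coordinate k and at most the fraction 1/(p C) on the other
   coordinates 2..n-1.  For a = p c and c >= p^2, Theta_(a,c) maps (theta(p), c)-concentrated vectors
   to (theta(p), c/p^2)-concentrated ones, where theta(p) = 1 - 2/p - (1 + 2p)/p^3: the diagonal
   entry a + 1 amplifies coordinate k, while the remaining rows together produce at most
   (2c + 1 + 2p) times the mass.  Since c_(i+1) = p^2 c_i, induction from e_k shows that all these
   vectors are (theta(p), c_j)-concentrated, and so is their limit w; as the I^(j)_i tile I^(j), this
   gives ratio at least theta(p) > 1/2 for I^(j)_k and at most 1/(p c_j theta(p)) for the others. *)

section \<open>Well-formed interval exchange data\<close>

lemma mset_insert_after: "mset (insert_after x y xs) = add_mset y (mset xs)"
proof -
  let ?d = "dropWhile (\<lambda>z. z \<noteq> x) xs"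
  have "xs = takeWhile (\<lambda>z. z \<noteq> x) xs @ take 1 ?d @ drop 1 ?d" by simp
  then have "mset xs = mset (takeWhile (\<lambda>z. z \<noteq> x) xs) + mset (take 1 ?d) + mset (drop 1 ?d)"
    by (metis mset_append add.assoc)
  then show ?thesis by (simp add: insert_after_def)
qed

lemma mset_insert_after_butlast_last:
  "xs \<noteq> [] \<Longrightarrow> mset (insert_after x (last xs) (butlast xs)) = mset xs"
  by (metis add_mset_add_single append_butlast_last_id mset.simps(1,2) mset_append mset_insert_after)

definition valid_iet :: "nat \<Rightarrow> iet \<Rightarrow> bool" where
  "valid_iet n s \<longleftrightarrow>
     (case s of (t, b, l) \<Rightarrow> distinct t \<and> set t = {1..n} \<and> (\<forall>i\<in>{1..n}. 0 < l i))"

lemma rauzy_step_valid: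
  assumes "0 < n" "valid_iet n s" "rauzy_step e s = Some s'"
  shows "valid_iet n s'"
proof -
  obtain t b l where s: "s = (t, b, l)" by (cases s)
  have t: "distinct t" "set t = {1..n}" and l: "\<forall>i\<in>{1..n}. 0 < l i"
    using assms(2) by (auto simp: valid_iet_def s)
  have "t \<noteq> []" using t(2) assms(1) by auto
  then have t': "mset (insert_after (last b) (last t) (butlast t)) = mset t"
    by (rule mset_insert_after_butlast_last)
  consider "l (last t) > l (last b)"
      "s' = (t, insert_after (last t) (last b) (butlast b), l(last t := l (last t) - l (last b)))"
    | "l (last b) > l (last t)"
      "s' = (insert_after (last b) (last t) (butlast t), b, l(last b := l (last b) - l (last t)))"
    using assms(3) by (auto simp: rauzy_step_def s Let_def split: if_splits)
  then show ?thesis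
  proof cases
    case 1
    then show ?thesis using t l by (auto simp: valid_iet_def)
  next
    case 2
    then show ?thesis using t l t' mset_eq_setD[OF t'] mset_eq_imp_distinct_iff[OF t']
      by (auto simp: valid_iet_def)
  qed
qed

lemma rauzy_run_valid:
  "0 < n \<Longrightarrow> valid_iet n s \<Longrightarrow> rauzy_run s w = Some s' \<Longrightarrow> valid_iet n s'"
proof (induction w arbitrary: s)
  case Nil
  then show ?case by simp
next
  case (Cons e w)
  then obtain s1 where "rauzy_step e s = Some s1" "rauzy_run s1 w = Some s'"
    by (auto split: option.splits)
  then show ?case using Cons rauzy_step_valid by blast
qed

lemma block_state_valid:
  assumes "0 < n" "follows_path s0 G" "valid_iet n s0"
  shows "valid_iet n (block_state s0 G j)"
proof (induction j)
  case 0
  then show ?case using assms(3) by simp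
next
  case (Suc j)
  from assms(2) obtain s' where "rauzy_run (block_state s0 G j) (G (Suc j)) = Some s'"
    unfolding follows_path_def by blast
  then show ?case using rauzy_run_valid[OF assms(1) Suc] by simp
qed

lemma valid_iet_pi_top: "(\<forall>i\<in>{1..n}. 0 < l i) \<Longrightarrow> valid_iet n (pi_top n, b, l)"
  by (auto simp: valid_iet_def pi_top_def)

lemma start_in_Cons: "start_in (x # xs) l i = (if x = i then 0 else l x + start_in xs l i)"
  by (simp add: start_in_def)

lemma atLeastLessThan_sum_list_subset_UN_start_in:
  assumes "distinct t" "\<forall>i\<in>set t. 0 \<le> l i"
  shows "{0..<sum_list (map l t)} \<subseteq> (\<Union>i\<in>set t. {start_in t l i..<start_in t l i + l i})"
  using assms
proof (induction t)
  case Nil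
  then show ?case by simp
next
  case (Cons x xs)
  show ?case
  proof
    fix y assume y: "y \<in> {0..<sum_list (map l (x # xs))}"
    show "y \<in> (\<Union>i\<in>set (x # xs). {start_in (x # xs) l i..<start_in (x # xs) l i + l i})"
    proof (cases "y < l x")
      case True
      then show ?thesis using y by (auto simp: start_in_Cons intro!: bexI[of _ x])
    next
      case False
      then have "y - l x \<in> {0..<sum_list (map l xs)}" using y by auto
      moreover have
        "{0..<sum_list (map l xs)} \<subseteq> (\<Union>i\<in>set xs. {start_in xs l i..<start_in xs l i + l i})"
        using Cons by simp
      ultimately obtain i where "i \<in> set xs" "y - l x \<in> {start_in xs l i..<start_in xs l i + l i}"
        by blast
      moreover have "i \<noteq> x" using calculation Cons.prems by auto
      ultimately show ?thesis by (auto simp: start_in_Cons intro!: bexI[of _ i])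
    qed
  qed
qed

lemma start_in_bounds:
  assumes "i \<in> set t" "\<forall>i\<in>set t. 0 \<le> l i"
  shows "0 \<le> start_in t l i \<and> start_in t l i + l i \<le> sum_list (map l t)"
  using assms
proof (induction t)
  case Nil
  then show ?case by simp
next
  case (Cons x xs)
  have "0 \<le> sum_list (map l xs)" using Cons.prems by (intro sum_list_nonneg) auto
  then show ?case using Cons by (auto simp: start_in_Cons)
qed

lemma whole_interval_subset_UN_sub_interval:
  assumes "valid_iet n s"
  shows "whole_interval s \<subseteq> (\<Union>i\<in>{1..n}. sub_interval s i)"
proof -
  obtain t b l where s: "s = (t, b, l)" by (cases s)
  have t: "distinct t" "set t = {1..n}" and l: "\<forall>i\<in>set t. 0 \<le> l i"
    using assms by (auto simp: valid_iet_def s less_imp_le)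
  show ?thesis
    using atLeastLessThan_sum_list_subset_UN_start_in[OF t(1) l]
    by (simp add: s t(2) whole_interval_def sub_interval_def)
qed

lemma sub_interval_subset_whole_interval:
  assumes "valid_iet n s" "i \<in> {1..n}"
  shows "sub_interval s i \<subseteq> whole_interval s"
proof -
  obtain t b l where s: "s = (t, b, l)" by (cases s)
  have "i \<in> set t" and l: "\<forall>i\<in>set t. 0 \<le> l i"
    using assms by (auto simp: valid_iet_def s less_imp_le)
  from start_in_bounds[OF this] show ?thesis
    by (auto simp: s whole_interval_def sub_interval_def)
qed

lemma sub_interval_borel: "sub_interval s i \<in> sets borel"
  by (cases s) (simp add: sub_interval_def)

lemma whole_interval_borel: "whole_interval s \<in> sets borel"
  by (cases s) (simp add: whole_interval_def)

section \<open>The matrices Theta\<close>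

lemma Theta_nonneg: "0 \<le> Theta n a c i j"
  by (simp add: Theta_def)

lemma mat_vec_Theta_nonneg: "\<forall>j\<in>{1..n}. 0 \<le> v j \<Longrightarrow> 0 \<le> mat_vec n (Theta n a c) v i"
  by (auto simp: mat_vec_def intro!: sum_nonneg mult_nonneg_nonneg Theta_nonneg)

lemma mat_vec_Theta_odd_row:
  assumes "odd i" "1 < i" "i < n"
  shows "mat_vec n (Theta n a c) v i = real a * v (i - 1) + (real a + 1) * v i"
proof -
  have "mat_vec n (Theta n a c) v i
      = (\<Sum>j\<in>{1..n}. (if j = i - 1 then real a * v j else 0) + (if j = i then (real a + 1) * v j else 0))"
    unfolding mat_vec_def using assms by (intro sum.cong) (auto simp: Theta_def)
  also have "\<dots> = real a * v (i - 1) + (real a + 1) * v i"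
  proof -
    have "i - 1 \<in> {1..n}" "i \<in> {1..n}" using assms by auto
    then show ?thesis by (simp add: sum.distrib)
  qed
  finally show ?thesis .
qed

lemma sum_mat_vec_le:
  assumes "\<forall>j\<in>{1..n}. 0 \<le> v j" "\<forall>j\<in>{1..n}. (\<Sum>i\<in>R. M i j) \<le> B"
  shows "(\<Sum>i\<in>R. mat_vec n M v i) \<le> B * vnorm1 n v"
proof -
  have "(\<Sum>i\<in>R. mat_vec n M v i) = (\<Sum>j\<in>{1..n}. (\<Sum>i\<in>R. M i j) * v j)"
    unfolding mat_vec_def by (simp add: sum.swap[of _ R] sum_distrib_right)
  also have "\<dots> \<le> (\<Sum>j\<in>{1..n}. B * v j)"
    using assms by (intro sum_mono mult_right_mono) auto
  also have "\<dots> = B * vnorm1 n v"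
    by (simp add: vnorm1_def sum_distrib_left)
  finally show ?thesis .
qed

lemma vnorm1_split:
  assumes "1 < k" "k < n"
  shows "vnorm1 n x = x k + (x 1 + x n + (\<Sum>i\<in>{2..n-1}-{k}. x i))"
proof -
  have "vnorm1 n x = x k + (\<Sum>i\<in>{1..n}-{k}. x i)"
    unfolding vnorm1_def using assms by (simp add: sum.remove)
  moreover have "{1..n}-{k} = insert 1 (insert n ({2..n-1}-{k}))"
    using assms by auto
  ultimately show ?thesis using assms by (simp add: algebra_simps)
qed

lemma mat_vec_Theta_even_row_le:
  assumes "even i" "1 < i" "i < n" "\<forall>j\<in>{1..n}. 0 \<le> v j"
  shows "mat_vec n (Theta n a c) v i \<le> 2 * vnorm1 n v"
proof -
  have "\<forall>j\<in>{1..n}. (\<Sum>i'\<in>{i}. Theta n a c i' j) \<le> 2"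
    using assms by (auto simp: Theta_def)
  from sum_mat_vec_le[OF assms(4) this] show ?thesis by simp
qed

lemma mat_vec_Theta_diag_ge:
  assumes "odd k" "1 < k" "k < n" "\<forall>j\<in>{1..n}. 0 \<le> v j"
  shows "(real a + 1) * v k \<le> mat_vec n (Theta n a c) v k"
proof -
  have "0 \<le> v (k - 1)" using assms by (simp add: Suc_le_eq)
  then show ?thesis using assms by (simp add: mat_vec_Theta_odd_row)
qed

lemma mat_vec_Theta_odd_rows_le:
  fixes v :: "nat \<Rightarrow> real"
  assumes "odd k" and v: "\<forall>j\<in>{1..n}. 0 \<le> v j"
  defines "Mid \<equiv> {2..n-1} - {k}"
  shows "(\<Sum>i\<in>{i\<in>Mid. odd i}. mat_vec n (Theta n a c) v i)
         \<le> 2 * (real a + 1) * (\<Sum>i\<in>Mid. v i)"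
proof -
  define Od where "Od = {i\<in>Mid. odd i}"
  (* For odd i, row i of Theta is supported on the columns i - 1 and i, both middle columns other
     than k because k is odd. *)
  have "inj_on (\<lambda>i. i - 1) Od" by (auto simp: inj_on_def Od_def Mid_def)
  then have "(\<Sum>i\<in>Od. v (i - 1)) = (\<Sum>i\<in>(\<lambda>i. i - 1) ` Od. v i)"
    by (simp add: sum.reindex)
  also have "\<dots> \<le> (\<Sum>i\<in>Mid. v i)"
  proof (rule sum_mono2)
    show "(\<lambda>i. i - 1) ` Od \<subseteq> Mid"
      using \<open>odd k\<close> by (auto simp: Od_def Mid_def elim!: oddE)
  qed (use v in \<open>auto simp: Mid_def\<close>)
  finally have shifted: "(\<Sum>i\<in>Od. v (i - 1)) \<le> (\<Sum>i\<in>Mid. v i)" .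
  have unshifted: "(\<Sum>i\<in>Od. v i) \<le> (\<Sum>i\<in>Mid. v i)"
    using v by (auto simp: Od_def Mid_def intro!: sum_mono2)
  have "(\<Sum>i\<in>Od. mat_vec n (Theta n a c) v i) \<le> (\<Sum>i\<in>Od. (real a + 1) * (v (i - 1) + v i))"
  proof (rule sum_mono)
    fix i assume "i \<in> Od"
    then have "odd i" "1 < i" "i < n" by (auto simp: Od_def Mid_def elim!: oddE)
    moreover have "0 \<le> v (i - 1)" using v \<open>1 < i\<close> \<open>i < n\<close> by (simp add: Suc_le_eq)
    ultimately show "mat_vec n (Theta n a c) v i \<le> (real a + 1) * (v (i - 1) + v i)"
      by (simp add: mat_vec_Theta_odd_row algebra_simps)
  qed
  also have "\<dots> = (real a + 1) * ((\<Sum>i\<in>Od. v (i - 1)) + (\<Sum>i\<in>Od. v i))"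
    by (simp only: sum_distrib_left[symmetric] sum.distrib)
  also have "\<dots> \<le> (real a + 1) * (2 * (\<Sum>i\<in>Mid. v i))"
    using shifted unshifted by (intro mult_left_mono) auto
  finally show ?thesis by (simp only: Od_def mult.left_commute mult.assoc)
qed

lemma mat_vec_Theta_middle_rows_le:
  fixes v :: "nat \<Rightarrow> real"
  assumes "odd k" and v: "\<forall>j\<in>{1..n}. 0 \<le> v j"
  defines "Mid \<equiv> {2..n-1} - {k}"
  shows "(\<Sum>i\<in>Mid. mat_vec n (Theta n a c) v i)
         \<le> 2 * real (n - 2) * vnorm1 n v + 2 * (real a + 1) * (\<Sum>i\<in>Mid. v i)"
proof -
  let ?x = "mat_vec n (Theta n a c) v"
  define E where "E = {i\<in>Mid. even i}"
  have "Mid = E \<union> {i\<in>Mid. odd i}" "E \<inter> {i\<in>Mid. odd i} = {}" "finite Mid"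
    by (auto simp: E_def Mid_def)
  then have split: "(\<Sum>i\<in>Mid. ?x i) = (\<Sum>i\<in>E. ?x i) + (\<Sum>i\<in>{i\<in>Mid. odd i}. ?x i)"
    by (metis finite_Un sum.union_disjoint)
  have "(\<Sum>i\<in>E. ?x i) \<le> real (card E) * (2 * vnorm1 n v)"
    by (rule sum_bounded_above)
      (use v in \<open>auto simp: E_def Mid_def intro!: mat_vec_Theta_even_row_le\<close>)
  also have "\<dots> \<le> real (n - 2) * (2 * vnorm1 n v)"
  proof (rule mult_right_mono)
    have "card E \<le> card {2..n-1}" by (rule card_mono) (auto simp: E_def Mid_def)
    then show "real (card E) \<le> real (n - 2)" by simp
  qed (use v in \<open>auto simp: vnorm1_def intro: sum_nonneg\<close>)
  finally show ?thesis
    using split mat_vec_Theta_odd_rows_le[OF \<open>odd k\<close> v, where a = a and c = c]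
    unfolding Mid_def by (simp add: algebra_simps)
qed

section \<open>An invariant cone\<close>

definition dominance_threshold :: "real \<Rightarrow> real" where
  "dominance_threshold P = 1 - 2 / P - (1 + 2 * P) / P ^ 3"

definition concentrated :: "nat \<Rightarrow> nat \<Rightarrow> real \<Rightarrow> real \<Rightarrow> (nat \<Rightarrow> real) \<Rightarrow> bool" where
  "concentrated n k \<theta> \<epsilon> v \<longleftrightarrow>
     (\<forall>i\<in>{1..n}. 0 \<le> v i) \<and> 0 < vnorm1 n v \<and> \<theta> * vnorm1 n v \<le> v k
     \<and> (\<Sum>i\<in>{2..n-1}-{k}. v i) \<le> \<epsilon> * vnorm1 n v"

lemma dominance_threshold_gt_half:
  assumes "5 \<le> P"
  shows "1 / 2 < dominance_threshold P"
proof -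
  have "P ^ 2 \<ge> 5 * P" "P ^ 3 \<ge> 5 * P ^ 2"
    using assms by (simp_all add: power2_eq_square power3_eq_cube mult_right_mono)
  then have "P * (2 + 4 * P + 4 * P ^ 2) < P * P ^ 3"
    using assms by (intro mult_strict_left_mono) auto
  then show ?thesis
    using assms by (simp add: dominance_threshold_def field_simps power3_eq_cube power2_eq_square)
qed

lemma dominance_threshold_le_one:
  assumes "0 < P"
  shows "dominance_threshold P \<le> 1"
proof -
  have "0 \<le> 2 / P" "0 \<le> (1 + 2 * P) / P ^ 3" using assms by auto
  then show ?thesis unfolding dominance_threshold_def by linarith
qed

lemma one_minus_dominance_threshold_ge:
  assumes "0 < P" "P ^ 2 \<le> c"
  shows "2 * c + 1 + 2 * P \<le> (1 - dominance_threshold P) * (P * c + 1)"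
proof -
  have "(1 - dominance_threshold P) * (P * c + 1)
      = 2 * c + (1 + 2 * P) * (c / P ^ 2) + 2 / P + (1 + 2 * P) / P ^ 3"
    using assms by (simp add: dominance_threshold_def field_simps power2_eq_square power3_eq_cube)
  moreover have "1 + 2 * P \<le> (1 + 2 * P) * (c / P ^ 2)"
    using assms by (simp add: mult_le_cancel_left1 pos_le_divide_eq)
  moreover have "0 \<le> 2 / P" "0 \<le> (1 + 2 * P) / P ^ 3" using assms by auto
  ultimately show ?thesis by linarith
qed

lemma inverse_dominance_threshold_lt:
  assumes "4 \<le> n" "n + 1 \<le> p" "0 < c"
  shows "1 / (real p * real c) / dominance_threshold p < real n / (2 * real c)"
proof -
  have "1 / 2 < dominance_threshold p" using assms by (intro dominance_threshold_gt_half) simp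
  then have "1 / (real p * real c) / dominance_threshold p < 2 / (real p * real c)"
    using assms by (simp add: field_simps)
  also have "\<dots> \<le> real n / (2 * real c)"
    using mult_mono[of 4 "real n" 1 "real p"] assms by (simp add: field_simps)
  finally show ?thesis .
qed

lemma mat_vec_Theta_middle_rows_le_norm:
  fixes P :: real
  assumes n: "2 \<le> n" "real n \<le> P" and c: "1 \<le> real c" and a: "real a = P * real c"
    and k: "odd k" and v: "\<forall>j\<in>{1..n}. 0 \<le> v j"
    and D: "(\<Sum>i\<in>{2..n-1}-{k}. v i) \<le> 1 / (P * real c) * vnorm1 n v"
  shows "(\<Sum>i\<in>{2..n-1}-{k}. mat_vec n (Theta n a c) v i) \<le> 2 * P * vnorm1 n v"
proof -
  define N where "N = vnorm1 n v"
  have N: "0 \<le> N" using v by (auto simp: N_def vnorm1_def intro: sum_nonneg)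
  have "1 \<le> P * real c" using mult_mono[of 1 P 1 "real c"] n c by simp
  then have "N / (P * real c) \<le> N" using N by (simp add: divide_le_eq mult_le_cancel_left1)
  moreover have "(real a + 1) * (\<Sum>i\<in>{2..n-1}-{k}. v i) \<le> (real a + 1) * (N / (P * real c))"
    using D by (intro mult_left_mono) (auto simp: N_def)
  moreover have "(real a + 1) * (N / (P * real c)) = N + N / (P * real c)"
    using a n c by (simp add: field_simps)
  ultimately have "(real a + 1) * (\<Sum>i\<in>{2..n-1}-{k}. v i) \<le> 2 * N" by linarith
  moreover have "real (n - 2) \<le> P - 2" using n by simp
  then have "2 * real (n - 2) * N \<le> 2 * (P - 2) * N" using N by (intro mult_right_mono) auto
  ultimately show ?thesis
    using mat_vec_Theta_middle_rows_le[OF k v, where a = a and c = c]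
    unfolding N_def by (simp add: algebra_simps)
qed

lemma mat_vec_Theta_non_k_rows_le:
  fixes P :: real
  assumes n: "2 \<le> n" "real n \<le> P" and c: "P ^ 2 \<le> real c" and a: "real a = P * real c"
    and k: "odd k" and v: "\<forall>j\<in>{1..n}. 0 \<le> v j"
    and D: "(\<Sum>i\<in>{2..n-1}-{k}. v i) \<le> 1 / (P * real c) * vnorm1 n v"
  defines "x \<equiv> mat_vec n (Theta n a c) v"
  shows "x 1 + x n + (\<Sum>i\<in>{2..n-1}-{k}. x i)
         \<le> (1 - dominance_threshold P) * (real a + 1) * vnorm1 n v"
proof -
  have P: "1 \<le> P" using n by simp
  then have c1: "1 \<le> real c" using c by (smt (verit) one_le_power)
  have "\<forall>j\<in>{1..n}. (\<Sum>i\<in>{1, n}. Theta n a c i j) \<le> 2 * real c + 1"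
    using n c1 by (auto simp: Theta_def)
  from sum_mat_vec_le[OF v this] have "x 1 + x n \<le> (2 * real c + 1) * vnorm1 n v"
    using n by (simp add: x_def)
  moreover have "(\<Sum>i\<in>{2..n-1}-{k}. x i) \<le> 2 * P * vnorm1 n v"
    unfolding x_def using n c1 a k v D by (rule mat_vec_Theta_middle_rows_le_norm)
  moreover have "(2 * real c + 1 + 2 * P) * vnorm1 n v
      \<le> (1 - dominance_threshold P) * (real a + 1) * vnorm1 n v"
    using one_minus_dominance_threshold_ge[OF _ c] P a v
    by (intro mult_right_mono) (auto simp: vnorm1_def intro: sum_nonneg)
  ultimately show ?thesis by (simp add: algebra_simps)
qed

lemma mat_vec_Theta_diag_ge_concentrated:
  assumes "odd k" "1 < k" "k < n" "concentrated n k \<theta> \<epsilon> v"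
  shows "(real a + 1) * (\<theta> * vnorm1 n v) \<le> mat_vec n (Theta n a c) v k"
proof -
  have "(real a + 1) * (\<theta> * vnorm1 n v) \<le> (real a + 1) * v k"
    using assms(4) by (intro mult_left_mono) (auto simp: concentrated_def)
  also have "\<dots> \<le> mat_vec n (Theta n a c) v k"
    using assms by (intro mat_vec_Theta_diag_ge) (auto simp: concentrated_def)
  finally show ?thesis .
qed

lemma mat_vec_Theta_middle_rows_le_vnorm1:
  fixes P C :: real
  assumes n: "4 \<le> n" and P: "real n + 1 \<le> P" and k: "odd k" "1 < k" "k < n"
    and C: "1 \<le> C" and c: "real c = P ^ 2 * C" and a: "real a = P * real c"
    and v: "concentrated n k (dominance_threshold P) (1 / (P * real c)) v"
  defines "x \<equiv> mat_vec n (Theta n a c) v"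
  shows "(\<Sum>i\<in>{2..n-1}-{k}. x i) \<le> 1 / (P * C) * vnorm1 n x"
proof -
  define \<theta> where "\<theta> = dominance_threshold P"
  define N where "N = vnorm1 n v"
  have P5: "5 \<le> P" using n P by linarith
  have c1: "1 \<le> real c" using c C P5 by (smt (verit) one_le_power mult_le_cancel_left1)
  have \<theta>: "1 / 2 < \<theta>" using dominance_threshold_gt_half[OF P5] by (simp add: \<theta>_def)
  have vnn: "\<forall>j\<in>{1..n}. 0 \<le> v j" and N: "0 < N" using v by (auto simp: concentrated_def N_def)
  have PC: "0 < P * C" using P5 C by simp
  have "(\<Sum>i\<in>{2..n-1}-{k}. x i) * (P * C) \<le> 2 * P * N * (P * C)"
    using mat_vec_Theta_middle_rows_le_norm[OF _ _ c1 a k(1) vnn] v n P PC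
    by (intro mult_right_mono) (auto simp: x_def N_def concentrated_def)
  also have "\<dots> = 2 * (P ^ 2 * C * N)" by (simp add: power2_eq_square algebra_simps)
  also have "\<dots> \<le> (P * \<theta>) * (P ^ 2 * C * N)"
  proof (rule mult_right_mono)
    show "2 \<le> P * \<theta>" using mult_mono[of 5 P "1 / 2" \<theta>] P5 \<theta> by simp
  qed (use N C in simp)
  also have "\<dots> \<le> (real a + 1) * (\<theta> * N)"
    using a c \<theta> N by (simp add: power2_eq_square algebra_simps)
  also have "\<dots> \<le> x k"
    unfolding x_def \<theta>_def N_def using k v by (rule mat_vec_Theta_diag_ge_concentrated)
  also have "\<dots> \<le> vnorm1 n x"
    unfolding vnorm1_def x_def using k vnn by (intro member_le_sum mat_vec_Theta_nonneg) auto
  finally show ?thesis using PC by (simp add: pos_le_divide_eq)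
qed

lemma concentrated_mat_vec_Theta:
  fixes P C :: real
  assumes n: "4 \<le> n" and P: "real n + 1 \<le> P" and k: "odd k" "1 < k" "k < n"
    and C: "1 \<le> C" and c: "real c = P ^ 2 * C" and a: "real a = P * real c"
    and v: "concentrated n k (dominance_threshold P) (1 / (P * real c)) v"
  shows "concentrated n k (dominance_threshold P) (1 / (P * C)) (mat_vec n (Theta n a c) v)"
proof -
  define \<theta> where "\<theta> = dominance_threshold P"
  define N where "N = vnorm1 n v"
  define x where "x = mat_vec n (Theta n a c) v"
  define rest where "rest = x 1 + x n + (\<Sum>i\<in>{2..n-1}-{k}. x i)"
  have P5: "5 \<le> P" using n P by linarith
  have cP: "P ^ 2 \<le> real c" using c C P5 by (simp add: mult_le_cancel_left1)
  have \<theta>: "1 / 2 < \<theta>" "\<theta> \<le> 1"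
    using dominance_threshold_gt_half[OF P5] dominance_threshold_le_one P5 by (auto simp: \<theta>_def)
  have vnn: "\<forall>j\<in>{1..n}. 0 \<le> v j" and N: "0 < N" using v by (auto simp: concentrated_def N_def)
  have xnn: "\<forall>i\<in>{1..n}. 0 \<le> x i" using vnn by (simp add: x_def mat_vec_Theta_nonneg)
  have xk: "(real a + 1) * (\<theta> * N) \<le> x k"
    unfolding x_def \<theta>_def N_def using k v by (rule mat_vec_Theta_diag_ge_concentrated)
  have "rest \<le> (1 - \<theta>) * (real a + 1) * N"
    using mat_vec_Theta_non_k_rows_le[OF _ _ cP a k(1) vnn] v n P
    by (simp add: rest_def x_def \<theta>_def N_def concentrated_def)
  then have "\<theta> * rest \<le> \<theta> * ((1 - \<theta>) * (real a + 1) * N)"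
    using \<theta> by (intro mult_left_mono) auto
  also have "\<dots> = (1 - \<theta>) * ((real a + 1) * (\<theta> * N))" by (simp add: algebra_simps)
  also have "\<dots> \<le> (1 - \<theta>) * x k" using xk \<theta> by (intro mult_left_mono) auto
  finally have "\<theta> * rest \<le> (1 - \<theta>) * x k" .
  moreover have "vnorm1 n x = x k + rest"
    unfolding rest_def using k(2,3) by (rule vnorm1_split)
  moreover have "0 < (real a + 1) * (\<theta> * N)" using \<theta> N by simp
  moreover have "0 \<le> rest" using xnn n by (auto simp: rest_def intro!: add_nonneg_nonneg sum_nonneg)
  ultimately have "0 < vnorm1 n x" "\<theta> * vnorm1 n x \<le> x k"
    using xk by (simp_all add: algebra_simps)
  with xnn show ?thesis
    using mat_vec_Theta_middle_rows_le_vnorm1[OF n P k C c a v]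
    by (simp add: concentrated_def \<theta>_def x_def)
qed

lemma mat_prod_apply_empty: "m \<le> j \<Longrightarrow> mat_prod_apply n Th j m v = v"
  by (simp add: mat_prod_apply_def)

lemma mat_prod_apply_Cons:
  "j < m \<Longrightarrow> mat_prod_apply n Th j m v = mat_vec n (Th (Suc j)) (mat_prod_apply n Th (Suc j) m v)"
  by (simp add: mat_prod_apply_def upt_conv_Cons del: upt_Suc)

lemma concentrated_unit_vec:
  assumes "1 < k" "k < n" "\<theta> \<le> 1" "0 \<le> \<epsilon>"
  shows "concentrated n k \<theta> \<epsilon> (unit_vec k)"
  using assms by (simp add: concentrated_def vnorm1_def unit_vec_def)

lemma geometric_pos:
  fixes f :: "nat \<Rightarrow> nat"
  assumes "\<forall>i\<ge>i0. f (Suc i) = q * f i" "0 < f i0" "0 < q" "i0 \<le> i"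
  shows "0 < f i"
  using assms(4)
proof (induction i rule: dec_induct)
  case base
  then show ?case using assms(2) by simp
next
  case (step i)
  then show ?case using assms(1,3) by simp
qed

lemma concentrated_mat_prod_apply_Theta:
  fixes p :: nat and a c :: "nat \<Rightarrow> nat"
  assumes n: "4 \<le> n" "n + 1 \<le> p" and k: "odd k" "1 < k" "k < n"
  shows "\<forall>i>j. a i = p * c i \<Longrightarrow> \<forall>i\<ge>j. c (Suc i) = p\<^sup>2 * c i \<Longrightarrow> 0 < c j \<Longrightarrow>
    concentrated n k (dominance_threshold p) (1 / (real p * real (c j)))
      (mat_prod_apply n (\<lambda>q. Theta n (a q) (c q)) j m (unit_vec k))"
proof (induct "m - j" arbitrary: j)
  case 0
  have "dominance_threshold p \<le> 1" using n by (intro dominance_threshold_le_one) simp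
  then show ?case using 0 k by (simp add: mat_prod_apply_empty concentrated_unit_vec)
next
  case (Suc d)
  have "mat_prod_apply n (\<lambda>q. Theta n (a q) (c q)) j m (unit_vec k)
      = mat_vec n (Theta n (a (Suc j)) (c (Suc j)))
          (mat_prod_apply n (\<lambda>q. Theta n (a q) (c q)) (Suc j) m (unit_vec k))"
    using Suc.hyps(2) by (simp add: mat_prod_apply_Cons)
  moreover have "concentrated n k (dominance_threshold p) (1 / (real p * real (c (Suc j))))
      (mat_prod_apply n (\<lambda>q. Theta n (a q) (c q)) (Suc j) m (unit_vec k))"
  proof (rule Suc.hyps(1))
    show "d = m - Suc j" using Suc.hyps(2) by simp
    show "0 < c (Suc j)" using Suc.prems n by simp
  qed (use Suc.prems in auto)
  ultimately show ?case
    using concentrated_mat_vec_Theta[OF n(1) _ k] Suc.prems n by simp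
qed

lemma vnorm1_vnormalize: "vnorm1 n v \<noteq> 0 \<Longrightarrow> vnorm1 n (vnormalize n v) = 1"
  by (simp add: vnormalize_def vnorm1_def sum_divide_distrib[symmetric])

lemma concentrated_vnormalize:
  assumes "concentrated n k \<theta> \<epsilon> v"
  shows "concentrated n k \<theta> \<epsilon> (vnormalize n v)"
proof -
  have N: "0 < vnorm1 n v" using assms by (simp add: concentrated_def)
  then have N1: "vnorm1 n (vnormalize n v) = 1" by (simp add: vnorm1_vnormalize)
  have "(\<Sum>i\<in>{2..n-1}-{k}. vnormalize n v i) = (\<Sum>i\<in>{2..n-1}-{k}. v i) / vnorm1 n v"
    by (simp add: vnormalize_def sum_divide_distrib)
  then show ?thesis
    using assms N unfolding concentrated_def N1
    by (simp add: vnormalize_def pos_le_divide_eq pos_divide_le_eq)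
qed

lemma concentrated_limit:
  assumes V: "\<And>m. concentrated n k \<theta> \<epsilon> (V m)" and k: "k \<in> {1..n}"
    and lim: "\<forall>i\<in>{1..n}. (\<lambda>m. vnormalize n (V m) i) \<longlonglongrightarrow> w i"
  shows "concentrated n k \<theta> \<epsilon> w" "vnorm1 n w = 1"
proof -
  define U where "U m = vnormalize n (V m)" for m
  have U1: "vnorm1 n (U m) = 1" for m
    using V[of m] by (simp add: U_def concentrated_def vnorm1_vnormalize)
  have U_nonneg: "\<forall>i\<in>{1..n}. 0 \<le> U m i" and U_k: "\<theta> \<le> U m k"
    and U_mid: "(\<Sum>i\<in>{2..n-1}-{k}. U m i) \<le> \<epsilon>" for m
    using concentrated_vnormalize[OF V, of m] U1[of m] by (simp_all add: U_def concentrated_def)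
  have lim: "(\<lambda>m. U m i) \<longlonglongrightarrow> w i" if "i \<in> {1..n}" for i
    using lim that by (simp add: U_def)
  have "(\<lambda>m. vnorm1 n (U m)) \<longlonglongrightarrow> vnorm1 n w"
    unfolding vnorm1_def by (intro tendsto_sum lim)
  moreover have "(\<lambda>m. vnorm1 n (U m)) \<longlonglongrightarrow> 1" by (simp add: U1)
  ultimately show w1: "vnorm1 n w = 1" by (rule LIMSEQ_unique)
  have "0 \<le> w i" if "i \<in> {1..n}" for i
    by (rule LIMSEQ_le_const[OF lim[OF that]]) (use U_nonneg that in blast)
  moreover have "\<theta> \<le> w k"
    by (rule LIMSEQ_le_const[OF lim[OF k]]) (use U_k in blast)
  moreover have "(\<lambda>m. \<Sum>i\<in>{2..n-1}-{k}. U m i) \<longlonglongrightarrow> (\<Sum>i\<in>{2..n-1}-{k}. w i)"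
    by (intro tendsto_sum lim) auto
  then have "(\<Sum>i\<in>{2..n-1}-{k}. w i) \<le> \<epsilon>"
    by (rule LIMSEQ_le_const2) (use U_mid in blast)
  ultimately show "concentrated n k \<theta> \<epsilon> w"
    using w1 by (simp add: concentrated_def)
qed

section \<open>The measures of the induced intervals\<close>

lemma measure_whole_interval_le_sum:
  assumes \<mu>: "finite_measure \<mu>" "sets \<mu> = sets borel" and s: "valid_iet n s"
  shows "measure \<mu> (whole_interval s) \<le> (\<Sum>i\<in>{1..n}. measure \<mu> (sub_interval s i))"
proof -
  have "measure \<mu> (whole_interval s) \<le> measure \<mu> (\<Union>i\<in>{1..n}. sub_interval s i)"
    using whole_interval_subset_UN_sub_interval[OF s] \<mu>(2) sub_interval_borel
    by (intro finite_measure.finite_measure_mono[OF \<mu>(1)]) auto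
  also have "\<dots> \<le> (\<Sum>i\<in>{1..n}. measure \<mu> (sub_interval s i))"
    using \<mu>(2) sub_interval_borel by (intro measure_UNION_le) auto
  finally show ?thesis .
qed

lemma measure_sub_interval_le_whole:
  assumes \<mu>: "finite_measure \<mu>" "sets \<mu> = sets borel" and s: "valid_iet n s" and i: "i \<in> {1..n}"
  shows "measure \<mu> (sub_interval s i) \<le> measure \<mu> (whole_interval s)"
  using sub_interval_subset_whole_interval[OF s i] \<mu>(2) whole_interval_borel
  by (intro finite_measure.finite_measure_mono[OF \<mu>(1)]) auto

lemma sub_interval_measure_ratios:
  assumes \<mu>: "finite_measure \<mu>" "sets \<mu> = sets borel" and s: "valid_iet n s"
    and k: "1 < k" "k < n" and t: "0 < t" and \<theta>: "0 < \<theta>"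
    and w: "concentrated n k \<theta> \<epsilon> w" "vnorm1 n w = 1"
    and \<mu>_sub: "\<forall>i\<in>{1..n}. measure \<mu> (sub_interval s i) = t * w i"
  shows "\<theta> \<le> measure \<mu> (sub_interval s k) / measure \<mu> (whole_interval s)"
    and "measure \<mu> (\<Union>i\<in>{2..n-1}-{k}. sub_interval s i) / measure \<mu> (whole_interval s)
           \<le> \<epsilon> / \<theta>"
proof -
  define M where "M = measure \<mu> (whole_interval s)"
  have M_le: "M \<le> t"
    using measure_whole_interval_le_sum[OF \<mu> s] \<mu>_sub w(2)
    by (simp add: M_def vnorm1_def sum_distrib_left[symmetric])
  have \<mu>_k: "measure \<mu> (sub_interval s k) = t * w k" using \<mu>_sub k by simp
  have wk: "t * \<theta> \<le> t * w k" using w t by (simp add: concentrated_def)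
  then have M_ge: "t * \<theta> \<le> M"
    using measure_sub_interval_le_whole[OF \<mu> s, of k] k \<mu>_k by (simp add: M_def)
  have t\<theta>: "0 < t * \<theta>" using t \<theta> by simp
  with M_ge have M: "0 < M" by linarith
  have "\<theta> * M \<le> \<theta> * t" using M_le \<theta> by (intro mult_left_mono) auto
  also have "\<dots> \<le> measure \<mu> (sub_interval s k)" using wk \<mu>_k by (simp add: mult.commute)
  finally show "\<theta> \<le> measure \<mu> (sub_interval s k) / M"
    using M by (simp add: pos_le_divide_eq)
  have "measure \<mu> (\<Union>i\<in>{2..n-1}-{k}. sub_interval s i)
      \<le> (\<Sum>i\<in>{2..n-1}-{k}. measure \<mu> (sub_interval s i))"
    using \<mu> sub_interval_borel by (intro measure_UNION_le) auto
  also have "\<dots> = t * (\<Sum>i\<in>{2..n-1}-{k}. w i)"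
    using \<mu>_sub by (auto simp: sum_distrib_left intro!: sum.cong)
  also have "\<dots> \<le> t * \<epsilon>"
    using w t by (intro mult_left_mono) (auto simp: concentrated_def)
  finally have U: "measure \<mu> (\<Union>i\<in>{2..n-1}-{k}. sub_interval s i) \<le> t * \<epsilon>" .
  have "0 \<le> (\<Sum>i\<in>{2..n-1}-{k}. w i)"
    using w by (auto simp: concentrated_def intro!: sum_nonneg)
  then have \<epsilon>: "0 \<le> \<epsilon>" using w by (simp add: concentrated_def)
  have "measure \<mu> (\<Union>i\<in>{2..n-1}-{k}. sub_interval s i) / M \<le> t * \<epsilon> / M"
    using U M by (intro divide_right_mono) auto
  also have "\<dots> \<le> t * \<epsilon> / (t * \<theta>)"
    using M_ge t\<theta> \<epsilon> t by (intro divide_left_mono) auto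
  also have "\<dots> = \<epsilon> / \<theta>" using t by simp
  finally show "measure \<mu> (\<Union>i\<in>{2..n-1}-{k}. sub_interval s i) / M \<le> \<epsilon> / \<theta>" .
qed

theorem mainTheorem4:
  fixes n p k j :: nat and a c :: "nat \<Rightarrow> nat" and l0 :: "nat \<Rightarrow> real"
    and \<mu> :: "real measure"
  assumes n: "n \<ge> 4" "even n"
    and p: "p \<ge> n + 1"
    and c1: "c 1 > 0"
    and ac: "\<forall>i\<ge>1. a i = p * c i" "\<forall>i\<ge>1. c (Suc i) = p\<^sup>2 * c i"
    and len: "\<forall>i\<in>{1..n}. l0 i > 0" "(\<Sum>i\<in>{1..n}. l0 i) = 1"
    and path: "follows_path (pi_top n, pi_bot n, l0) (\<lambda>i. gamma_word n (a i) (c i))"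
    and meas: "prob_space \<mu>" "sets \<mu> = sets borel" "emeasure \<mu> {0..<1} = 1"
    and inv: "\<forall>A\<in>sets borel. emeasure \<mu> (iet_map (pi_top n, pi_bot n, l0) -` A) = emeasure \<mu> A"
    and lam: "\<forall>j'. \<exists>w t. t > 0 \<and>
         (\<forall>i\<in>{1..n}. (\<lambda>m. vnormalize n (mat_prod_apply n (\<lambda>q. Theta n (a q) (c q)) j' m (unit_vec k)) i)
                        \<longlonglongrightarrow> w i) \<and>
         (\<forall>i\<in>{1..n}. measure \<mu> (sub_interval
              (block_state (pi_top n, pi_bot n, l0) (\<lambda>q. gamma_word n (a q) (c q)) j') i) = t * w i)"
    and k: "odd k" "3 \<le> k" "k \<le> n - 1"
    and j: "j \<ge> 1"
  shows "measure \<mu> (sub_interval (block_state (pi_top n, pi_bot n, l0) (\<lambda>q. gamma_word n (a q) (c q)) j) k)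
           / measure \<mu> (whole_interval (block_state (pi_top n, pi_bot n, l0) (\<lambda>q. gamma_word n (a q) (c q)) j))
           > 1 / 2
       \<and> measure \<mu> (\<Union>i\<in>{2..n-1} - {k}. sub_interval (block_state (pi_top n, pi_bot n, l0) (\<lambda>q. gamma_word n (a q) (c q)) j) i)
           / measure \<mu> (whole_interval (block_state (pi_top n, pi_bot n, l0) (\<lambda>q. gamma_word n (a q) (c q)) j))
           < real n / (2 * real (c j))"
proof -
  define G where "G = (\<lambda>q. gamma_word n (a q) (c q))"
  define S where "S = block_state (pi_top n, pi_bot n, l0) G j"
  have k': "1 < k" "k < n" using k n by auto
  have cj: "0 < c j" using geometric_pos[OF ac(2) c1 _ j] p by simp
  have \<theta>: "1 / 2 < dominance_threshold p" using n p by (intro dominance_threshold_gt_half) simp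
  then have \<theta>_pos: "0 < dominance_threshold p" by linarith
  have valid: "valid_iet n S"
    unfolding S_def using n path[folded G_def] valid_iet_pi_top[OF len(1)]
    by (intro block_state_valid) auto
  obtain w t where t: "t > 0"
    and lim: "\<forall>i\<in>{1..n}. (\<lambda>m. vnormalize n (mat_prod_apply n (\<lambda>q. Theta n (a q) (c q)) j m (unit_vec k)) i)
                \<longlonglongrightarrow> w i"
    and \<mu>_sub: "\<forall>i\<in>{1..n}. measure \<mu> (sub_interval S i) = t * w i"
    using lam unfolding S_def G_def by blast
  have "concentrated n k (dominance_threshold p) (1 / (real p * real (c j))) w" "vnorm1 n w = 1"
    using concentrated_limit[OF concentrated_mat_prod_apply_Theta[OF n(1) p k(1) k'] _ lim] ac cj k' j
    by auto
  note ratios = sub_interval_measure_ratios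
    [OF prob_space.finite_measure[OF meas(1)] meas(2) valid k' t \<theta>_pos this \<mu>_sub]
  have "1 / 2 < measure \<mu> (sub_interval S k) / measure \<mu> (whole_interval S)"
    using \<theta> ratios(1) by linarith
  moreover have "measure \<mu> (\<Union>i\<in>{2..n-1}-{k}. sub_interval S i) / measure \<mu> (whole_interval S)
      < real n / (2 * real (c j))"
    using ratios(2) inverse_dominance_threshold_lt[OF n(1) p cj] by linarith
  ultimately show ?thesis unfolding S_def G_def by blast
qed

end
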